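(* Let $M$ be a universal left-c.e. semi-measure and $\mathcal S$ the collection of all left-c.e. semi-measures. There is a left-c.e. semi-measure $\widetilde M$ that is not universal such that $\mathsf{MLR}_{\widetilde M}=\mathsf{MLR}_M=\bigcup_{\rho\in\mathcal S}\mathsf{MLR}_\rho$.
   Context: $2^{<\omega}$ is the set of finite binary strings, $\varepsilon$ the empty string, $[\![\sigma]\!]=\{X\in2^\omega:\sigma\preceq X\}$, $[\![S]\!]=\bigcup_{\sigma\in S}[\![\sigma]\!]$. A semi-measure is $\rho:2^{<\omega}\to[0,1]$ with $\rho(\varepsilon)=1$ and $\rho(\sigma)\ge\rho(\sigma0)+\rho(\sigma1)$; it is left-c.e. if its values are uniformly approximable from below by a computable, non-decreasing sequence of rationals. A left-c.e. semi-measure $M$ is universal if for every left-c.e. semi-measure $\rho$ there is $c\in\omega$ with $\rho(\sigma)\le c\cdot M(\sigma)$ for all $\sigma$. For $E\subseteq2^{<\omega}$, $\rho(E)=\sum_{\sigma\in E}\rho(\sigma)$. $X\in\mathsf{MLR}_\rho$ iff $X\notin\bigcap_i[\![U_i]\!]$ for every uniformly c.e. sequence $(U_i)$ of subsets of $2^{<\omega}$ with $\rho(U_i)\le2^{-i}$ for all $i$. *)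

theory Defs
  imports "HOL-Analysis.Analysis" "HOL-Library.Nat_Bijection"
begin

datatype recf = Zero | Succ | Proj nat | Comp recf "recf list" | Prim recf recf | Mn recf

inductive eval :: "recf \<Rightarrow> nat list \<Rightarrow> nat \<Rightarrow> bool" where
  eval_Zero: "eval Zero xs 0"
| eval_Succ: "eval Succ (x # xs) (Suc x)"
| eval_Proj: "i < length xs \<Longrightarrow> eval (Proj i) xs (xs ! i)"
| eval_Comp: "\<lbrakk> length ys = length fs; \<forall>i < length fs. eval (fs ! i) xs (ys ! i); eval g ys r \<rbrakk>
     \<Longrightarrow> eval (Comp g fs) xs r"
| eval_Prim0: "eval f xs r \<Longrightarrow> eval (Prim f g) (0 # xs) r"
| eval_PrimS: "\<lbrakk> eval (Prim f g) (n # xs) r; eval g (n # r # xs) s \<rbrakk>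
     \<Longrightarrow> eval (Prim f g) (Suc n # xs) s"
| eval_Mn: "\<lbrakk> eval f (n # xs) 0; \<forall>m < n. \<exists>k. k \<noteq> 0 \<and> eval f (m # xs) k \<rbrakk>
     \<Longrightarrow> eval (Mn f) xs n"

definition computable :: "(nat \<Rightarrow> nat) \<Rightarrow> bool" where
  "computable g \<longleftrightarrow> (\<exists>f. \<forall>n. eval f [n] (g n))"

definition ce_set :: "nat set \<Rightarrow> bool" where
  "ce_set A \<longleftrightarrow> (\<exists>f. A = {n. \<exists>r. eval f [n] r})"

text \<open>Finite binary strings are bool lists; infinite sequences are functions nat to bool.
  Effective coding of strings by naturals (bijective base-2 numeration).\<close>
definition str_code :: "bool list \<Rightarrow> nat" where
  "str_code \<sigma> = foldr (\<lambda>b n. 2 * n + (if b then 2 else 1)) \<sigma> 0"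

definition prefix_of :: "bool list \<Rightarrow> (nat \<Rightarrow> bool) \<Rightarrow> bool" where
  "prefix_of \<sigma> X \<longleftrightarrow> (\<forall>i < length \<sigma>. X i = \<sigma> ! i)"

definition cyl :: "bool list set \<Rightarrow> (nat \<Rightarrow> bool) set" where
  "cyl S = {X. \<exists>\<sigma>\<in>S. prefix_of \<sigma> X}"

definition semimeasure :: "(bool list \<Rightarrow> real) \<Rightarrow> bool" where
  "semimeasure \<rho> \<longleftrightarrow> \<rho> [] = 1 \<and> (\<forall>\<sigma>. 0 \<le> \<rho> \<sigma> \<and> \<rho> \<sigma> \<le> 1) \<and>
     (\<forall>\<sigma>. \<rho> (\<sigma> @ [False]) + \<rho> (\<sigma> @ [True]) \<le> \<rho> \<sigma>)"

definition rat_of_code :: "nat \<Rightarrow> real" where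
  "rat_of_code n = (case prod_decode n of (a, b) \<Rightarrow> real a / real (b + 1))"

definition left_ce :: "(bool list \<Rightarrow> real) \<Rightarrow> bool" where
  "left_ce \<rho> \<longleftrightarrow> (\<exists>g. computable g \<and>
     (\<forall>\<sigma> s. rat_of_code (g (prod_encode (str_code \<sigma>, s)))
              \<le> rat_of_code (g (prod_encode (str_code \<sigma>, Suc s)))) \<and>
     (\<forall>\<sigma>. (\<lambda>s. rat_of_code (g (prod_encode (str_code \<sigma>, s)))) \<longlonglongrightarrow> \<rho> \<sigma>))"

definition left_ce_semimeasure :: "(bool list \<Rightarrow> real) \<Rightarrow> bool" where
  "left_ce_semimeasure \<rho> \<longleftrightarrow> semimeasure \<rho> \<and> left_ce \<rho>"

definition universal :: "(bool list \<Rightarrow> real) \<Rightarrow> bool" where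
  "universal M \<longleftrightarrow> left_ce_semimeasure M \<and>
     (\<forall>\<rho>. left_ce_semimeasure \<rho> \<longrightarrow> (\<exists>c::nat. \<forall>\<sigma>. \<rho> \<sigma> \<le> real c * M \<sigma>))"

text \<open>rho(E) = sum over E, as an extended nonnegative real (always well-defined).\<close>
definition weight :: "(bool list \<Rightarrow> real) \<Rightarrow> bool list set \<Rightarrow> ennreal" where
  "weight \<rho> E = (\<Sum>\<^sub>\<infinity>\<sigma>\<in>E. ennreal (\<rho> \<sigma>))"

definition unif_ce :: "(nat \<Rightarrow> bool list set) \<Rightarrow> bool" where
  "unif_ce U \<longleftrightarrow> ce_set {prod_encode (i, str_code \<sigma>) | i \<sigma>. \<sigma> \<in> U i}"

definition MLR :: "(bool list \<Rightarrow> real) \<Rightarrow> (nat \<Rightarrow> bool) set" where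
  "MLR \<rho> = {X. \<forall>U. unif_ce U \<and> (\<forall>i. weight \<rho> (U i) \<le> ennreal ((1/2) ^ i))
                 \<longrightarrow> X \<notin> (\<Inter>i. cyl (U i))}"

end

theory Submission
  imports Defs
begin

(* Let M~(\<sigma>) = M(\<sigma>) / 2^n, where n is the number of leading ones of \<sigma>, counted only once
   \<sigma> contains a zero. Since n never decreases along extensions and is computable from \<sigma>,
   M~ is again a left-c.e. semimeasure. It is not universal: on \<sigma> = 1^c 0 the ratio M/M~ is 2^c,
   while a universal M is positive everywhere.

   Randomness does not change. M~ \<le> M gives one inclusion. Conversely, along a fixed sequence X
   the exponent n stays below some k, so an M~-test covering X, restricted to the strings with
   n \<le> k and shifted by k, is an M-test covering X. The same restriction-and-shift argument
   shows MLR \<rho> \<subseteq> MLR M whenever \<rho> \<le> c M, which yields the last equality by universality. *)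

inductive_cases eval_ZeroE: "eval Zero xs r"
inductive_cases eval_SuccE: "eval Succ xs r"
inductive_cases eval_ProjE: "eval (Proj i) xs r"
inductive_cases eval_CompE: "eval (Comp g fs) xs r"
inductive_cases eval_PrimE: "eval (Prim f g) xs r"
inductive_cases eval_MnE: "eval (Mn f) xs r"

lemma length_Suc_0_iff_singleton: "length xs = Suc 0 \<longleftrightarrow> xs = [xs ! 0]"
  by (cases xs) auto

lemma eval_deterministic: "eval f xs r \<Longrightarrow> eval f xs r' \<Longrightarrow> r = r'"
proof (induction arbitrary: r' rule: eval.induct)
  case (eval_Comp ys fs xs g r)
  from eval_Comp.prems obtain ys' where ys': "length ys' = length fs"
    "\<forall>i<length fs. eval (fs ! i) xs (ys' ! i)" "eval g ys' r'"
    by (rule eval_CompE) blast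
  have "ys = ys'"
    using eval_Comp.IH(1) eval_Comp.hyps(1) ys' by (intro nth_equalityI) auto
  then show ?case using eval_Comp.IH(2) ys' by blast
next
  case (eval_Mn f n xs)
  from eval_Mn.prems obtain n' where n': "eval f (n' # xs) 0"
    "\<forall>m<n'. \<exists>k. k \<noteq> 0 \<and> eval f (m # xs) k" "r' = n'"
    by (rule eval_MnE) blast
  show ?case
    using n' eval_Mn.IH by (cases n n' rule: linorder_cases) fastforce+
next
  case eval_Prim0
  from eval_Prim0.prems show ?case by (rule eval_PrimE) (use eval_Prim0.IH in auto)
next
  case eval_PrimS
  from eval_PrimS.prems show ?case by (rule eval_PrimE) (use eval_PrimS.IH in auto)
qed (auto elim: eval_ZeroE eval_SuccE eval_ProjE)

lemma eval_Proj_iff: "eval (Proj i) xs r \<longleftrightarrow> i < length xs \<and> r = xs ! i"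
  by (auto elim: eval_ProjE intro: eval_Proj)

lemma eval_Comp_single_iff: "eval (Comp g [f]) xs r \<longleftrightarrow> (\<exists>y. eval f xs y \<and> eval g [y] r)"
proof
  assume "eval (Comp g [f]) xs r"
  then obtain ys where "length ys = 1" "eval f xs (ys ! 0)" "eval g ys r"
    by (elim eval_CompE) auto
  then show "\<exists>y. eval f xs y \<and> eval g [y] r"
    by (metis One_nat_def length_Suc_0_iff_singleton)
qed (auto intro: eval_Comp[where ys = "[_]"])

lemma eval_Comp_Proj_0_pair_iff:
  "eval (Comp (Proj 0) [f, f']) xs r \<longleftrightarrow> eval f xs r \<and> (\<exists>y. eval f' xs y)"
proof
  assume "eval (Comp (Proj 0) [f, f']) xs r"
  then obtain ys where "length ys = 2" "\<forall>i<2. eval ([f, f'] ! i) xs (ys ! i)" "eval (Proj 0) ys r"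
    by (elim eval_CompE) (simp add: numeral_2_eq_2)
  then show "eval f xs r \<and> (\<exists>y. eval f' xs y)"
    by (auto simp: less_2_cases_iff eval_Proj_iff)
next
  assume "eval f xs r \<and> (\<exists>y. eval f' xs y)"
  then obtain y where "eval f xs r" "eval f' xs y" by blast
  then show "eval (Comp (Proj 0) [f, f']) xs r"
    by (intro eval_Comp[where ys = "[r, y]"]) (auto simp: less_Suc_eq nth_Cons' eval_Proj_iff)
qed

lemma eval_Mn_Proj_1_iff: "eval (Mn (Proj (Suc 0))) [x] r \<longleftrightarrow> x = 0 \<and> r = 0"
  by (auto elim!: eval_MnE intro!: eval_Mn simp: eval_Proj_iff)

section \<open>Closure properties of total recursive functions\<close>

definition recursive :: "nat \<Rightarrow> (nat list \<Rightarrow> nat) \<Rightarrow> bool" where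
  "recursive k F \<longleftrightarrow> (\<exists>f. \<forall>xs. length xs = k \<longrightarrow> eval f xs (F xs))"

lemma computable_iff_recursive: "computable g \<longleftrightarrow> recursive 1 (\<lambda>xs. g (xs ! 0))"
  unfolding computable_def recursive_def
  by (metis One_nat_def length_Suc_0_iff_singleton length_Cons list.size(3) nth_Cons_0)

lemma recursive_cong:
  "recursive k F \<Longrightarrow> (\<And>xs. length xs = k \<Longrightarrow> F xs = G xs) \<Longrightarrow> recursive k G"
  unfolding recursive_def by metis

lemma recursive_proj: "i < k \<Longrightarrow> recursive k (\<lambda>xs. xs ! i)"
  unfolding recursive_def by (metis eval_Proj)

lemma recursive_comp:
  assumes G: "recursive m G" and len: "\<And>xs. length xs = k \<Longrightarrow> length (Fs xs) = m"
    and Fs: "\<And>i. i < m \<Longrightarrow> recursive k (\<lambda>xs. Fs xs ! i)"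
  shows "recursive k (\<lambda>xs. G (Fs xs))"
proof -
  obtain g where g: "\<forall>ys. length ys = m \<longrightarrow> eval g ys (G ys)"
    using G unfolding recursive_def by blast
  have "\<forall>i<m. \<exists>f. \<forall>xs. length xs = k \<longrightarrow> eval f xs (Fs xs ! i)"
    using Fs unfolding recursive_def by blast
  then obtain fs where fs: "\<forall>i<m. \<forall>xs. length xs = k \<longrightarrow> eval (fs i) xs (Fs xs ! i)"
    by metis
  have "eval (Comp g (map fs [0..<m])) xs (G (Fs xs))" if "length xs = k" for xs
    by (rule eval_Comp) (use fs g len that in auto)
  then show ?thesis unfolding recursive_def by blast
qed

lemma recursive_comp1:
  "recursive 1 G \<Longrightarrow> recursive k F \<Longrightarrow> recursive k (\<lambda>xs. G [F xs])"
  by (rule recursive_comp[where Fs = "\<lambda>xs. [F xs]"]) auto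

lemma recursive_drop: "recursive k G \<Longrightarrow> recursive (m + k) (\<lambda>xs. G (drop m xs))"
  by (rule recursive_comp) (auto intro: recursive_cong[OF recursive_proj[of "m + _"]])

lemma recursive_Suc: "recursive k F \<Longrightarrow> recursive k (\<lambda>xs. Suc (F xs))"
proof -
  have "recursive 1 (\<lambda>xs. Suc (xs ! 0))"
    unfolding recursive_def by (metis One_nat_def length_Suc_0_iff_singleton eval_Succ nth_Cons_0)
  then show "recursive k F \<Longrightarrow> recursive k (\<lambda>xs. Suc (F xs))"
    using recursive_comp1 by fastforce
qed

lemma recursive_const: "recursive k (\<lambda>_. c)"
proof (induction c)
  case 0
  then show ?case unfolding recursive_def by (metis eval_Zero)
qed (rule recursive_Suc)

fun prim_rec :: "(nat list \<Rightarrow> nat) \<Rightarrow> (nat list \<Rightarrow> nat) \<Rightarrow> nat \<Rightarrow> nat list \<Rightarrow> nat" where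
  "prim_rec F G 0 xs = F xs"
| "prim_rec F G (Suc n) xs = G (n # prim_rec F G n xs # xs)"

lemma recursive_prim_rec:
  assumes "recursive k F" "recursive (Suc (Suc k)) G" "recursive k N"
  shows "recursive k (\<lambda>xs. prim_rec F G (N xs) xs)"
proof -
  obtain f g n where f: "\<forall>xs. length xs = k \<longrightarrow> eval f xs (F xs)"
    and g: "\<forall>ys. length ys = Suc (Suc k) \<longrightarrow> eval g ys (G ys)"
    and n: "\<forall>xs. length xs = k \<longrightarrow> eval n xs (N xs)"
    using assms unfolding recursive_def by blast
  have prim: "eval (Prim f g) (m # xs) (prim_rec F G m xs)" if "length xs = k" for m xs
    by (induction m) (use f g that in \<open>auto intro: eval_Prim0 eval_PrimS\<close>)
  have "eval (Comp (Prim f g) (n # map Proj [0..<k])) xs (prim_rec F G (N xs) xs)"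
    if xs: "length xs = k" for xs
  proof (rule eval_Comp[where ys = "N xs # xs"])
    show "\<forall>i<length (n # map Proj [0..<k]). eval ((n # map Proj [0..<k]) ! i) xs ((N xs # xs) ! i)"
      using n xs by (auto simp: nth_Cons' intro: eval_Proj)
  qed (use xs prim in auto)
  then show ?thesis unfolding recursive_def by blast
qed

lemma recursive_add:
  assumes "recursive k F" "recursive k G"
  shows "recursive k (\<lambda>xs. F xs + G xs)"
proof -
  have "recursive k (\<lambda>xs. prim_rec G (\<lambda>ys. Suc (ys ! 1)) (F xs) xs)"
    by (intro recursive_prim_rec recursive_Suc recursive_proj assms) simp
  moreover have "prim_rec G (\<lambda>ys. Suc (ys ! 1)) n xs = n + G xs" for n xs
    by (induction n) auto
  ultimately show ?thesis by simp
qed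

lemma recursive_mult:
  assumes "recursive k F" "recursive k G"
  shows "recursive k (\<lambda>xs. F xs * G xs)"
proof -
  have "recursive (2 + k) (\<lambda>ys. G (drop 2 ys))" by (rule recursive_drop[OF assms(2)])
  then have "recursive k (\<lambda>xs. prim_rec (\<lambda>_. 0) (\<lambda>ys. ys ! 1 + G (drop 2 ys)) (F xs) xs)"
    by (intro recursive_prim_rec recursive_add recursive_proj recursive_const assms) simp_all
  moreover have "prim_rec (\<lambda>_. 0) (\<lambda>ys. ys ! 1 + G (drop 2 ys)) n xs = n * G xs" for n xs
    by (induction n) auto
  ultimately show ?thesis by simp
qed

lemma recursive_pred: "recursive k F \<Longrightarrow> recursive k (\<lambda>xs. F xs - 1)"
proof -
  assume "recursive k F"
  then have "recursive k (\<lambda>xs. prim_rec (\<lambda>_. 0) (\<lambda>ys. ys ! 0) (F xs) xs)"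
    by (intro recursive_prim_rec recursive_proj recursive_const) simp_all
  moreover have "prim_rec (\<lambda>_. 0) (\<lambda>ys. ys ! 0) n xs = n - 1" for n xs
    by (induction n) auto
  ultimately show ?thesis by simp
qed

lemma recursive_diff:
  assumes "recursive k F" "recursive k G"
  shows "recursive k (\<lambda>xs. F xs - G xs)"
proof -
  have "recursive k (\<lambda>xs. prim_rec F (\<lambda>ys. ys ! 1 - 1) (G xs) xs)"
    by (intro recursive_prim_rec recursive_pred recursive_proj assms) simp
  moreover have "prim_rec F (\<lambda>ys. ys ! 1 - 1) n xs = F xs - n" for n xs
    by (induction n) auto
  ultimately show ?thesis by simp
qed

lemma recursive_if_zero:
  assumes "recursive k C" "recursive k A" "recursive k B"
  shows "recursive k (\<lambda>xs. if C xs = 0 then A xs else B xs)"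
proof -
  have "recursive k (\<lambda>xs. A xs * (1 - C xs) + B xs * (1 - (1 - C xs)))"
    by (intro recursive_add recursive_mult recursive_diff recursive_const assms)
  then show ?thesis by (rule recursive_cong) auto
qed

lemma recursive_if_le:
  assumes "recursive k C" "recursive k D" "recursive k A" "recursive k B"
  shows "recursive k (\<lambda>xs. if C xs \<le> D xs then A xs else B xs)"
  using recursive_if_zero[OF recursive_diff[OF assms(1,2)] assms(3,4)] by simp

lemma recursive_if_eq:
  assumes "recursive k C" "recursive k D" "recursive k A" "recursive k B"
  shows "recursive k (\<lambda>xs. if C xs = D xs then A xs else B xs)"
proof -
  have "recursive k (\<lambda>xs. if (C xs - D xs) + (D xs - C xs) = 0 then A xs else B xs)"
    by (intro recursive_if_zero recursive_add recursive_diff assms)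
  then show ?thesis by (rule recursive_cong) auto
qed

lemma recursive_pow2: "recursive k F \<Longrightarrow> recursive k (\<lambda>xs. 2 ^ F xs)"
proof -
  assume "recursive k F"
  then have "recursive k (\<lambda>xs. prim_rec (\<lambda>_. 1) (\<lambda>ys. ys ! 1 + ys ! 1) (F xs) xs)"
    by (intro recursive_prim_rec recursive_add recursive_proj recursive_const) simp_all
  moreover have "prim_rec (\<lambda>_. 1) (\<lambda>ys. ys ! 1 + ys ! 1) n xs = 2 ^ n" for n xs
    by (induction n) auto
  ultimately show ?thesis by simp
qed

lemma recursive_sum:
  assumes "recursive (Suc k) H" "recursive k B"
  shows "recursive k (\<lambda>xs. \<Sum>q<B xs. H (q # xs))"
proof -
  have "recursive (Suc (Suc k)) (\<lambda>ys. H (ys ! 0 # drop 2 ys))"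
  proof (rule recursive_comp[OF assms(1)])
    fix i assume "i < Suc k"
    then have "recursive (Suc (Suc k)) (\<lambda>ys. ys ! (if i = 0 then 0 else Suc i))"
      by (intro recursive_proj) auto
    then show "recursive (Suc (Suc k)) (\<lambda>ys. (ys ! 0 # drop 2 ys) ! i)"
      by (rule recursive_cong) (auto simp: nth_Cons' nth_drop)
  qed simp
  then have "recursive k (\<lambda>xs. prim_rec (\<lambda>_. 0) (\<lambda>ys. ys ! 1 + H (ys ! 0 # drop 2 ys)) (B xs) xs)"
    by (intro recursive_prim_rec recursive_add recursive_proj recursive_const assms) simp_all
  moreover have "prim_rec (\<lambda>_. 0) (\<lambda>ys. ys ! 1 + H (ys ! 0 # drop 2 ys)) n xs = (\<Sum>q<n. H (q # xs))"
    for n xs by (induction n) auto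
  ultimately show ?thesis by simp
qed

lemma recursive_triangle: "recursive k F \<Longrightarrow> recursive k (\<lambda>xs. triangle (F xs))"
proof -
  assume "recursive k F"
  then have "recursive k (\<lambda>xs. prim_rec (\<lambda>_. 0) (\<lambda>ys. ys ! 1 + Suc (ys ! 0)) (F xs) xs)"
    by (intro recursive_prim_rec recursive_add recursive_Suc recursive_proj recursive_const) simp_all
  moreover have "prim_rec (\<lambda>_. 0) (\<lambda>ys. ys ! 1 + Suc (ys ! 0)) n xs = triangle n" for n xs
    by (induction n) auto
  ultimately show ?thesis by simp
qed

lemma recursive_prod_encode:
  "recursive k A \<Longrightarrow> recursive k B \<Longrightarrow> recursive k (\<lambda>xs. prod_encode (A xs, B xs))"
  unfolding prod_encode_def by (simp add: recursive_add recursive_triangle)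

primrec triangle_root :: "nat \<Rightarrow> nat" where
  "triangle_root 0 = 0"
| "triangle_root (Suc n) =
     (if triangle (Suc (triangle_root n)) \<le> Suc n then Suc (triangle_root n) else triangle_root n)"

lemma triangle_root_bounds: "triangle (triangle_root n) \<le> n \<and> n < triangle (Suc (triangle_root n))"
  by (induction n) auto

lemma prod_decode_triangle_root:
  "prod_decode n = (n - triangle (triangle_root n), triangle_root n - (n - triangle (triangle_root n)))"
proof -
  let ?s = "triangle_root n" and ?m = "n - triangle (triangle_root n)"
  have n: "n = triangle ?s + ?m" and "?m \<le> ?s"
    using triangle_root_bounds[of n] by (auto simp: triangle_Suc)
  then show ?thesis
    by (metis prod_decode_triangle_add prod_decode_aux.simps le_add_diff_inverse le_imp_less_Suc)
qed

lemma recursive_triangle_root: "recursive k F \<Longrightarrow> recursive k (\<lambda>xs. triangle_root (F xs))"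
proof -
  let ?G = "\<lambda>ys. if triangle (Suc (ys ! 1)) \<le> Suc (ys ! 0) then Suc (ys ! 1) else ys ! 1"
  assume "recursive k F"
  then have "recursive k (\<lambda>xs. prim_rec (\<lambda>_. 0) ?G (F xs) xs)"
    by (intro recursive_prim_rec recursive_if_le recursive_triangle recursive_Suc
        recursive_proj recursive_const) simp_all
  moreover have "prim_rec (\<lambda>_. 0) ?G n xs = triangle_root n" for n xs
    by (induction n) auto
  ultimately show ?thesis by simp
qed

lemma recursive_fst_prod_decode:
  "recursive k F \<Longrightarrow> recursive k (\<lambda>xs. fst (prod_decode (F xs)))"
  by (subst prod_decode_triangle_root) (simp add: recursive_diff recursive_triangle recursive_triangle_root)

lemma recursive_snd_prod_decode:
  "recursive k F \<Longrightarrow> recursive k (\<lambda>xs. snd (prod_decode (F xs)))"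
  by (subst prod_decode_triangle_root) (simp add: recursive_diff recursive_triangle recursive_triangle_root)

lemma dvd_iff_bounded_quotient: "(d::nat) dvd x \<longleftrightarrow> (\<exists>q<Suc x. q * d = x)"
  by (metis dvd_def dvd_imp_le dvd_triv_left le_imp_less_Suc mult.commute mult_0 nat_dvd_not_less
      not_gr_zero zero_less_Suc)

lemma recursive_dvd:
  assumes D: "recursive k D" and X: "recursive k X"
  shows "recursive k (\<lambda>xs. if D xs dvd X xs then 1 else 0)"
proof -
  have "recursive (Suc k) (\<lambda>ys. if ys ! 0 * D (drop 1 ys) = X (drop 1 ys) then 1 else 0)"
    using recursive_drop[OF D, of 1] recursive_drop[OF X, of 1]
    by (intro recursive_if_eq recursive_mult recursive_proj recursive_const) simp_all
  from recursive_sum[OF this recursive_Suc[OF X]]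
  have "recursive k (\<lambda>xs. \<Sum>q<Suc (X xs). if q * D xs = X xs then 1 else 0)"
    by (simp del: sum.lessThan_Suc)
  then have "recursive k (\<lambda>xs. if (\<Sum>q<Suc (X xs). if q * D xs = X xs then 1 else 0::nat) = 0 then 0 else 1)"
    by (intro recursive_if_zero recursive_const)
  then show ?thesis
    by (rule recursive_cong) (simp add: dvd_iff_bounded_quotient sum_eq_0_iff del: sum.lessThan_Suc)
qed

lemma multiplicity_two_eq_sum: "multiplicity 2 x = (\<Sum>t<x. if 2 ^ Suc t dvd x then 1 else 0 :: nat)"
proof (cases "x = 0")
  case False
  have "2 ^ multiplicity 2 x \<le> x"
    using False by (simp add: dvd_imp_le multiplicity_dvd)
  then have "multiplicity 2 x < x" using less_exp order.strict_trans2 by blast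
  moreover have "2 ^ Suc t dvd x \<longleftrightarrow> t < multiplicity 2 x" for t
    using False by (simp add: power_dvd_iff_le_multiplicity Suc_le_eq del: power_Suc)
  ultimately show ?thesis
    by (simp add: sum.If_cases Int_absorb1 subset_eq)
qed simp

lemma recursive_multiplicity_two: "recursive k F \<Longrightarrow> recursive k (\<lambda>xs. multiplicity 2 (F xs))"
proof -
  assume F: "recursive k F"
  have "recursive (Suc k) (\<lambda>ys. if 2 ^ Suc (ys ! 0) dvd F (drop 1 ys) then 1 else 0)"
    using recursive_drop[OF F, of 1]
    by (intro recursive_dvd recursive_pow2 recursive_Suc recursive_proj) simp_all
  from recursive_sum[OF this F]
  have "recursive k (\<lambda>xs. \<Sum>t<F xs. if 2 ^ Suc t dvd F xs then 1 else 0)"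
    by simp
  then show ?thesis by (simp add: multiplicity_two_eq_sum)
qed

section \<open>Leading ones of a binary string\<close>

lemma str_code_Nil [simp]: "str_code [] = 0"
  by (simp add: str_code_def)

lemma str_code_Cons [simp]: "str_code (b # \<sigma>) = 2 * str_code \<sigma> + (if b then 2 else 1)"
  by (simp add: str_code_def)

lemma str_code_snoc: "str_code (\<sigma> @ [b]) = str_code \<sigma> + 2 ^ length \<sigma> * (if b then 2 else 1)"
  by (induction \<sigma>) auto

(* Strings without a zero get 0, which keeps leading_ones bounded along 1 1 1 ... as well. *)
definition leading_ones :: "bool list \<Rightarrow> nat" where
  "leading_ones \<sigma> = (if False \<in> set \<sigma> then length (takeWhile id \<sigma>) else 0)"

lemma leading_ones_Nil [simp]: "leading_ones [] = 0"
  by (simp add: leading_ones_def)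

lemma leading_ones_append: "False \<in> set \<sigma> \<Longrightarrow> leading_ones (\<sigma> @ \<tau>) = leading_ones \<sigma>"
  unfolding leading_ones_def by (auto simp: takeWhile_append1)

lemma leading_ones_le_append: "leading_ones \<sigma> \<le> leading_ones (\<sigma> @ \<tau>)"
  by (cases "False \<in> set \<sigma>") (auto simp: leading_ones_append leading_ones_def)

lemma leading_ones_replicate: "leading_ones (replicate n True @ [False]) = n"
  unfolding leading_ones_def by (induction n) auto

lemma leading_ones_prefixes_bounded: "\<exists>k. \<forall>n. leading_ones (map X [0..<n]) \<le> k"
proof (cases "\<forall>p. X p")
  case True
  then show ?thesis by (auto simp: leading_ones_def)
next
  case False
  then obtain p where p: "\<not> X p" by blast
  have split: "map X [0..<j] = map X [0..<i] @ map X [i..<j]" if "i \<le> j" for i j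
    by (metis that le_add_diff_inverse map_append upt_add_eq_append zero_le)
  have "leading_ones (map X [0..<n]) \<le> leading_ones (map X [0..<Suc p])" for n
  proof (cases "n \<le> Suc p")
    case True
    then show ?thesis by (metis split leading_ones_le_append)
  next
    case False
    have F: "False \<in> set (map X [0..<Suc p])" using p by force
    have "map X [0..<n] = map X [0..<Suc p] @ map X [Suc p..<n]" using False by (intro split) simp
    then show ?thesis by (metis leading_ones_append[OF F] order_refl)
  qed
  then show ?thesis by blast
qed

(* For \<sigma> = 1^n we have str_code \<sigma> + 2 = 2^(n+1); otherwise the 2-adic valuation of
   str_code \<sigma> + 2 is the number of leading ones of \<sigma>. *)
definition leading_ones_of_code :: "nat \<Rightarrow> nat" where
  "leading_ones_of_code c =
     (if 2 ^ multiplicity 2 (c + 2) = c + 2 then 0 else multiplicity 2 (c + 2))"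

lemma multiplicity_two_str_code:
  "(2 ^ multiplicity 2 (str_code \<sigma> + 2) = str_code \<sigma> + 2 \<longleftrightarrow> False \<notin> set \<sigma>) \<and>
   (False \<in> set \<sigma> \<longrightarrow> multiplicity 2 (str_code \<sigma> + 2) = length (takeWhile id \<sigma>))"
proof (induction \<sigma>)
  case Nil
  have "multiplicity 2 (2::nat) = 1" by (rule multiplicity_prime) simp
  then show ?case by (simp only: str_code_Nil add_0) simp
next
  case (Cons b \<sigma>)
  show ?case
  proof (cases b)
    case True
    then have "str_code (b # \<sigma>) + 2 = 2 * (str_code \<sigma> + 2)" by simp
    moreover have "multiplicity 2 (2 * (str_code \<sigma> + 2)) = Suc (multiplicity 2 (str_code \<sigma> + 2))"
      by (rule multiplicity_times_same) simp_all
    ultimately have "multiplicity 2 (str_code (b # \<sigma>) + 2) = Suc (multiplicity 2 (str_code \<sigma> + 2))"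
      by simp
    then show ?thesis using Cons True by auto
  next
    case False
    then have "multiplicity 2 (str_code (b # \<sigma>) + 2) = 0"
      by (intro not_dvd_imp_multiplicity_0) simp
    then show ?thesis using False by simp
  qed
qed

lemma leading_ones_of_code_str_code: "leading_ones_of_code (str_code \<sigma>) = leading_ones \<sigma>"
  using multiplicity_two_str_code[of \<sigma>] unfolding leading_ones_of_code_def leading_ones_def by auto

lemma recursive_leading_ones_of_code:
  "recursive k F \<Longrightarrow> recursive k (\<lambda>xs. leading_ones_of_code (F xs))"
  unfolding leading_ones_of_code_def
  by (intro recursive_if_eq recursive_pow2 recursive_multiplicity_two recursive_add recursive_const)

section \<open>Effective tests\<close>

(* Mn (Proj 1) is defined exactly at 0, so composing with it cuts the domain down to q n = 0. *)
lemma ce_set_vimage_filter: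
  assumes "ce_set S" and h: "recursive 1 (\<lambda>xs. h (xs ! 0))" and q: "recursive 1 (\<lambda>xs. q (xs ! 0))"
  shows "ce_set {n. h n \<in> S \<and> q n = 0}"
proof -
  obtain f where f: "S = {n. \<exists>r. eval f [n] r}" using assms(1) unfolding ce_set_def by blast
  obtain fh where "\<forall>n. eval fh [n] (h n)"
    using h unfolding computable_iff_recursive[symmetric] computable_def by blast
  then have fh: "eval fh [n] y \<longleftrightarrow> y = h n" for n y using eval_deterministic by blast
  obtain fq where "\<forall>n. eval fq [n] (q n)"
    using q unfolding computable_iff_recursive[symmetric] computable_def by blast
  then have fq: "eval fq [n] y \<longleftrightarrow> y = q n" for n y using eval_deterministic by blast
  let ?f = "Comp (Proj 0) [Comp f [fh], Comp (Mn (Proj 1)) [fq]]"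
  have "eval ?f [n] r \<longleftrightarrow> eval f [h n] r \<and> q n = 0" for n r
    by (simp add: eval_Comp_Proj_0_pair_iff eval_Comp_single_iff eval_Mn_Proj_1_iff fh fq)
  then have "{n. h n \<in> S \<and> q n = 0} = {n. \<exists>r. eval ?f [n] r}"
    using f by auto
  then show ?thesis unfolding ce_set_def by blast
qed

lemma unif_ce_shift_filter:
  assumes "unif_ce V" "recursive 1 (\<lambda>xs. Q (xs ! 0))"
  shows "unif_ce (\<lambda>i. {\<sigma> \<in> V (i + k). Q (str_code \<sigma>) = 0})"
proof -
  let ?S = "{prod_encode (i, str_code \<sigma>) | i \<sigma>. \<sigma> \<in> V i}"
  let ?h = "\<lambda>n. prod_encode (fst (prod_decode n) + k, snd (prod_decode n))"
  let ?q = "\<lambda>n. Q (snd (prod_decode n))"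
  have n: "recursive 1 (\<lambda>xs. xs ! 0)" by (rule recursive_proj) simp
  have "ce_set {n. ?h n \<in> ?S \<and> ?q n = 0}"
  proof (rule ce_set_vimage_filter)
    show "recursive 1 (\<lambda>xs. ?h (xs ! 0))"
      by (intro recursive_prod_encode recursive_add recursive_fst_prod_decode
          recursive_snd_prod_decode recursive_const n)
    show "recursive 1 (\<lambda>xs. ?q (xs ! 0))"
      using recursive_comp1[OF assms(2) recursive_snd_prod_decode[OF n]] by simp
  qed (use assms(1) unif_ce_def in blast)
  moreover have "{n. ?h n \<in> ?S \<and> ?q n = 0} =
      {prod_encode (i, str_code \<sigma>) | i \<sigma>. \<sigma> \<in> V (i + k) \<and> Q (str_code \<sigma>) = 0}"
  proof (intro set_eqI iffI)
    fix n assume "n \<in> {n. ?h n \<in> ?S \<and> ?q n = 0}"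
    moreover obtain i c where "prod_decode n = (i, c)" by fastforce
    moreover from this have "n = prod_encode (i, c)" by (metis prod_decode_inverse)
    ultimately show "n \<in> {prod_encode (i, str_code \<sigma>) | i \<sigma>. \<sigma> \<in> V (i + k) \<and> Q (str_code \<sigma>) = 0}"
      by (auto simp: prod_encode_eq)
  qed auto
  ultimately show ?thesis unfolding unif_ce_def by simp
qed

lemma infsum_cmult_right_ennreal:
  "(\<Sum>\<^sub>\<infinity>x\<in>A. c * f x) = c * (\<Sum>\<^sub>\<infinity>x\<in>A. (f x :: ennreal))"
proof -
  have "(\<Sum>\<^sub>\<infinity>x\<in>A. c * f x) = (SUP F\<in>{F. finite F \<and> F \<subseteq> A}. c * sum f F)"
    by (simp add: nonneg_infsum_complete sum_distrib_left)
  also have "\<dots> = c * (\<Sum>\<^sub>\<infinity>x\<in>A. f x)"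
    by (simp add: nonneg_infsum_complete SUP_mult_left_ennreal)
  finally show ?thesis .
qed

lemma weight_le_scaled:
  assumes "A \<subseteq> B" "0 \<le> c" "\<And>\<sigma>. \<sigma> \<in> A \<Longrightarrow> \<rho> \<sigma> \<le> c * \<rho>' \<sigma>"
  shows "weight \<rho> A \<le> ennreal c * weight \<rho>' B"
proof -
  have "weight \<rho> A \<le> (\<Sum>\<^sub>\<infinity>\<sigma>\<in>B. ennreal c * ennreal (\<rho>' \<sigma>))"
    unfolding weight_def
    by (rule infsum_mono_neutral)
      (use assms in \<open>auto simp: ennreal_mult'[symmetric] ennreal_leI intro: nonneg_summable_on_complete\<close>)
  then show ?thesis by (simp add: weight_def infsum_cmult_right_ennreal)
qed

lemma prefix_of_eq_map: "prefix_of \<sigma> X \<Longrightarrow> \<sigma> = map X [0..<length \<sigma>]"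
  unfolding prefix_of_def by (intro nth_equalityI) auto

(* A \<rho>'-test covering X becomes a \<rho>-test covering X after discarding the strings \<sigma> with
   Q (str_code \<sigma>) > k (no prefix of X is among them) and shifting indices by k. *)
lemma MLR_subset_MLR_if_levelwise_dominated:
  fixes Q :: "nat \<Rightarrow> nat"
  assumes Q: "recursive 1 (\<lambda>xs. Q (xs ! 0))"
    and dominated: "\<And>\<sigma> k. Q (str_code \<sigma>) \<le> k \<Longrightarrow> \<rho> \<sigma> \<le> 2 ^ k * \<rho>' \<sigma>"
    and bounded: "\<And>X. \<exists>k. \<forall>n. Q (str_code (map X [0..<n])) \<le> k"
  shows "MLR \<rho> \<subseteq> MLR \<rho>'"
proof
  fix X assume X: "X \<in> MLR \<rho>"
  show "X \<in> MLR \<rho>'" unfolding MLR_def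
  proof (intro CollectI allI impI notI)
    fix V assume V: "unif_ce V \<and> (\<forall>i. weight \<rho>' (V i) \<le> ennreal ((1/2) ^ i))"
      and XV: "X \<in> (\<Inter>i. cyl (V i))"
    obtain k where k: "\<forall>n. Q (str_code (map X [0..<n])) \<le> k" using bounded by blast
    define W where "W i = {\<sigma> \<in> V (i + k). Q (str_code \<sigma>) - k = 0}" for i
    have "unif_ce W"
      unfolding W_def using V Q
      by (intro unif_ce_shift_filter) (auto intro: recursive_diff recursive_const)
    moreover have "weight \<rho> (W i) \<le> ennreal ((1/2) ^ i)" for i
    proof -
      have "weight \<rho> (W i) \<le> ennreal (2 ^ k) * weight \<rho>' (V (i + k))"
        by (rule weight_le_scaled) (auto simp: W_def intro: dominated)
      also have "\<dots> \<le> ennreal (2 ^ k) * ennreal ((1/2) ^ (i + k))"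
        using V by (intro mult_left_mono) auto
      also have "\<dots> = ennreal ((1/2) ^ i)"
        by (simp add: ennreal_mult'[symmetric] power_add power_one_over)
      finally show ?thesis .
    qed
    moreover have "X \<in> cyl (W i)" for i
    proof -
      from XV obtain \<sigma> where \<sigma>: "\<sigma> \<in> V (i + k)" "prefix_of \<sigma> X" unfolding cyl_def by blast
      then have "Q (str_code \<sigma>) \<le> k" using k prefix_of_eq_map by metis
      then show ?thesis using \<sigma> unfolding cyl_def W_def by auto
    qed
    ultimately show False using X unfolding MLR_def by blast
  qed
qed

lemma MLR_subset_MLR_if_dominated:
  assumes "\<And>\<sigma>. \<rho> \<sigma> \<le> real c * \<rho>' \<sigma>" "\<And>\<sigma>. 0 \<le> \<rho>' \<sigma>"
  shows "MLR \<rho> \<subseteq> MLR \<rho>'"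
proof (rule MLR_subset_MLR_if_levelwise_dominated[where Q = "\<lambda>_. c"])
  fix \<sigma> and k :: nat assume "c \<le> k"
  then have "real c \<le> 2 ^ k"
    using of_nat_less_two_power[of c, where 'a = real] power_increasing[of c k "2::real"] by linarith
  then show "\<rho> \<sigma> \<le> 2 ^ k * \<rho>' \<sigma>"
    using assms by (meson mult_right_mono order_trans)
qed (auto intro: recursive_const)

section \<open>Left-c.e. semimeasures\<close>

lemma rat_of_code_prod_encode: "rat_of_code (prod_encode (a, b)) = real a / real (b + 1)"
  by (simp add: rat_of_code_def)

lemma rat_of_code_divide_pow2:
  "rat_of_code (prod_encode (fst (prod_decode m), (snd (prod_decode m) + 1) * 2 ^ z - 1))
     = rat_of_code m / 2 ^ z"
proof -
  obtain a b where ab: "prod_decode m = (a, b)" by fastforce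
  have "(b + 1) * 2 ^ z - 1 + 1 = (b + 1) * (2 ^ z :: nat)" by simp
  then show ?thesis using ab by (simp add: rat_of_code_def field_simps del: mult_Suc mult_Suc_right)
qed

lemma semimeasure_divide_pow2:
  assumes "semimeasure \<rho>" "e [] = 0" "\<And>\<sigma> b. e \<sigma> \<le> e (\<sigma> @ [b])"
  shows "semimeasure (\<lambda>\<sigma>. \<rho> \<sigma> / 2 ^ e \<sigma>)"
  unfolding semimeasure_def
proof (intro conjI allI)
  have \<rho>: "0 \<le> \<rho> \<sigma>" "\<rho> \<sigma> \<le> 1" "\<rho> (\<sigma> @ [False]) + \<rho> (\<sigma> @ [True]) \<le> \<rho> \<sigma>" for \<sigma>
    using assms(1) unfolding semimeasure_def by auto
  have antimono: "\<rho> \<sigma> / 2 ^ n \<le> \<rho> \<sigma> / 2 ^ m" if "m \<le> n" for \<sigma> m n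
    using \<rho>(1) that by (intro divide_left_mono) auto
  show "\<rho> [] / 2 ^ e [] = 1" using assms(1,2) unfolding semimeasure_def by simp
  fix \<sigma>
  show "0 \<le> \<rho> \<sigma> / 2 ^ e \<sigma>" using \<rho>(1) by simp
  show "\<rho> \<sigma> / 2 ^ e \<sigma> \<le> 1"
    using antimono[of 0 "e \<sigma>" \<sigma>] \<rho>(2)[of \<sigma>] by (simp only: power_0 div_by_1) linarith
  have "\<rho> (\<sigma> @ [False]) / 2 ^ e (\<sigma> @ [False]) + \<rho> (\<sigma> @ [True]) / 2 ^ e (\<sigma> @ [True])
      \<le> \<rho> (\<sigma> @ [False]) / 2 ^ e \<sigma> + \<rho> (\<sigma> @ [True]) / 2 ^ e \<sigma>"
    using antimono assms(3) by (meson add_mono)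
  also have "\<dots> \<le> \<rho> \<sigma> / 2 ^ e \<sigma>"
    using \<rho>(3) by (simp add: add_divide_distrib[symmetric] divide_right_mono)
  finally show "\<rho> (\<sigma> @ [False]) / 2 ^ e (\<sigma> @ [False]) + \<rho> (\<sigma> @ [True]) / 2 ^ e (\<sigma> @ [True])
      \<le> \<rho> \<sigma> / 2 ^ e \<sigma>" .
qed

lemma left_ce_divide_pow2:
  assumes "left_ce \<rho>" "recursive 1 (\<lambda>xs. h (xs ! 0))"
  shows "left_ce (\<lambda>\<sigma>. \<rho> \<sigma> / 2 ^ h (str_code \<sigma>))"
proof -
  obtain g where g: "computable g"
    "\<And>\<sigma> s. rat_of_code (g (prod_encode (str_code \<sigma>, s))) \<le> rat_of_code (g (prod_encode (str_code \<sigma>, Suc s)))"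
    "\<And>\<sigma>. (\<lambda>s. rat_of_code (g (prod_encode (str_code \<sigma>, s)))) \<longlonglongrightarrow> \<rho> \<sigma>"
    using assms(1) unfolding left_ce_def by blast
  define g' where "g' n = prod_encode (fst (prod_decode (g n)),
      (snd (prod_decode (g n)) + 1) * 2 ^ h (fst (prod_decode n)) - 1)" for n
  have n: "recursive 1 (\<lambda>xs. xs ! 0)" by (rule recursive_proj) simp
  have "recursive 1 (\<lambda>xs. g' (xs ! 0))"
    unfolding g'_def using g(1) recursive_comp1[OF assms(2) recursive_fst_prod_decode[OF n]]
    by (intro recursive_prod_encode recursive_diff recursive_mult recursive_add recursive_pow2
        recursive_fst_prod_decode recursive_snd_prod_decode recursive_const)
      (simp_all add: computable_iff_recursive)
  moreover have g': "rat_of_code (g' (prod_encode (str_code \<sigma>, s)))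
      = rat_of_code (g (prod_encode (str_code \<sigma>, s))) / 2 ^ h (str_code \<sigma>)" for \<sigma> s
    unfolding g'_def by (simp only: prod_encode_inverse fst_conv rat_of_code_divide_pow2)
  moreover have "rat_of_code (g' (prod_encode (str_code \<sigma>, s)))
      \<le> rat_of_code (g' (prod_encode (str_code \<sigma>, Suc s)))" for \<sigma> s
    unfolding g' using g(2) by (rule divide_right_mono) simp
  moreover have "(\<lambda>s. rat_of_code (g' (prod_encode (str_code \<sigma>, s))))
      \<longlonglongrightarrow> \<rho> \<sigma> / 2 ^ h (str_code \<sigma>)" for \<sigma>
    unfolding g' by (intro tendsto_divide tendsto_const g(3)) simp
  ultimately show ?thesis
    unfolding left_ce_def computable_iff_recursive by blast
qed

definition half_pow_code :: "bool list \<Rightarrow> real" where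
  "half_pow_code \<sigma> = (1/2) ^ str_code \<sigma>"

lemma left_ce_semimeasure_half_pow_code: "left_ce_semimeasure half_pow_code"
  unfolding left_ce_semimeasure_def
proof
  show "semimeasure half_pow_code"
    unfolding semimeasure_def
  proof (intro conjI allI)
    fix \<sigma>
    let ?c = "str_code \<sigma>" and ?p = "2 ^ length \<sigma> :: nat"
    have "(1/2 :: real) ^ ?p \<le> 1/2"
      using power_decreasing[of 1 ?p "1/2 :: real"] by simp
    moreover have "(1/2 :: real) ^ (2 * ?p) \<le> (1/2) ^ ?p"
      by (rule power_decreasing) simp_all
    ultimately have "(1/2 :: real) ^ ?c * ((1/2) ^ ?p + (1/2) ^ (2 * ?p)) \<le> (1/2) ^ ?c"
      by (intro mult_left_le) (linarith, simp)
    then show "half_pow_code (\<sigma> @ [False]) + half_pow_code (\<sigma> @ [True]) \<le> half_pow_code \<sigma>"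
      unfolding half_pow_code_def str_code_snoc by (simp add: power_add distrib_left mult.commute)
  qed (simp_all add: half_pow_code_def power_le_one)
  define g where "g n = prod_encode (1, 2 ^ fst (prod_decode n) - 1)" for n
  have "recursive 1 (\<lambda>xs. g (xs ! 0))"
    unfolding g_def
    by (intro recursive_prod_encode recursive_diff recursive_pow2 recursive_fst_prod_decode
        recursive_proj recursive_const) simp
  moreover have "rat_of_code (g (prod_encode (str_code \<sigma>, s))) = half_pow_code \<sigma>" for \<sigma> s
    by (simp add: g_def rat_of_code_prod_encode half_pow_code_def power_one_over)
  ultimately show "left_ce half_pow_code"
    unfolding left_ce_def computable_iff_recursive by (intro exI[of _ g]) simp
qed

lemma universal_pos:
  assumes "universal M"
  shows "0 < M \<sigma>"
proof -
  have M: "0 \<le> M \<sigma>"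
    using assms unfolding universal_def left_ce_semimeasure_def semimeasure_def by blast
  obtain c :: nat where "\<forall>\<sigma>. half_pow_code \<sigma> \<le> real c * M \<sigma>"
    using assms left_ce_semimeasure_half_pow_code unfolding universal_def by blast
  moreover have "0 < half_pow_code \<sigma>" by (simp add: half_pow_code_def)
  ultimately have "0 < real c * M \<sigma>" by (meson less_le_trans)
  then show ?thesis using M by (simp add: zero_less_mult_iff)
qed

section \<open>The damped semimeasure\<close>

definition damped :: "(bool list \<Rightarrow> real) \<Rightarrow> bool list \<Rightarrow> real" where
  "damped M \<sigma> = M \<sigma> / 2 ^ leading_ones \<sigma>"

lemma left_ce_semimeasure_damped:
  assumes "left_ce_semimeasure M"
  shows "left_ce_semimeasure (damped M)"
proof -
  have "damped M = (\<lambda>\<sigma>. M \<sigma> / 2 ^ leading_ones_of_code (str_code \<sigma>))"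
    by (simp add: fun_eq_iff damped_def leading_ones_of_code_str_code)
  moreover have "left_ce (\<lambda>\<sigma>. M \<sigma> / 2 ^ leading_ones_of_code (str_code \<sigma>))"
    using assms unfolding left_ce_semimeasure_def
    by (intro left_ce_divide_pow2 recursive_leading_ones_of_code recursive_proj) auto
  moreover have "semimeasure (damped M)"
    using assms leading_ones_le_append unfolding left_ce_semimeasure_def damped_def
    by (intro semimeasure_divide_pow2) auto
  ultimately show ?thesis unfolding left_ce_semimeasure_def by simp
qed

lemma MLR_damped:
  assumes "semimeasure M"
  shows "MLR (damped M) = MLR M"
proof
  have M: "0 \<le> M \<sigma>" for \<sigma> using assms unfolding semimeasure_def by blast
  show "MLR (damped M) \<subseteq> MLR M"
  proof (rule MLR_subset_MLR_if_dominated[where c = 1])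
    show "damped M \<sigma> \<le> real 1 * M \<sigma>" for \<sigma>
      unfolding damped_def using divide_left_mono[of 1 "2 ^ leading_ones \<sigma>" "M \<sigma>"] M by simp
  qed (rule M)
  show "MLR M \<subseteq> MLR (damped M)"
  proof (rule MLR_subset_MLR_if_levelwise_dominated[where Q = leading_ones_of_code])
    fix \<sigma> and k :: nat assume "leading_ones_of_code (str_code \<sigma>) \<le> k"
    then have "(2::real) ^ leading_ones \<sigma> \<le> 2 ^ k"
      by (simp add: leading_ones_of_code_str_code)
    then have "M \<sigma> * 2 ^ leading_ones \<sigma> \<le> M \<sigma> * 2 ^ k" using M by (rule mult_left_mono)
    then show "M \<sigma> \<le> 2 ^ k * damped M \<sigma>" by (simp add: damped_def field_simps)
  qed (use leading_ones_prefixes_bounded in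
        \<open>auto simp: leading_ones_of_code_str_code intro: recursive_leading_ones_of_code recursive_proj\<close>)
qed

lemma not_universal_damped:
  assumes "universal M"
  shows "\<not> universal (damped M)"
proof
  assume "universal (damped M)"
  then obtain c :: nat where c: "M \<sigma> \<le> real c * damped M \<sigma>" for \<sigma>
    using assms unfolding universal_def by blast
  define \<sigma> where "\<sigma> = replicate c True @ [False]"
  have "M \<sigma> \<le> real c / 2 ^ c * M \<sigma>"
    using c[of \<sigma>] by (simp add: damped_def \<sigma>_def leading_ones_replicate)
  also have "\<dots> < 1 * M \<sigma>"
    using universal_pos[OF assms, of \<sigma>] of_nat_less_two_power[of c, where 'a = real]
    by (intro mult_strict_right_mono) simp_all
  finally show False by simp
qed

lemma MLR_universal_eq_Union:
  assumes "universal M"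
  shows "MLR M = (\<Union>\<rho>\<in>{\<rho>. left_ce_semimeasure \<rho>}. MLR \<rho>)"
proof
  show "MLR M \<subseteq> (\<Union>\<rho>\<in>{\<rho>. left_ce_semimeasure \<rho>}. MLR \<rho>)"
    using assms unfolding universal_def by blast
  show "(\<Union>\<rho>\<in>{\<rho>. left_ce_semimeasure \<rho>}. MLR \<rho>) \<subseteq> MLR M"
  proof (rule UN_least)
    fix \<rho> assume "\<rho> \<in> {\<rho>. left_ce_semimeasure \<rho>}"
    then obtain c :: nat where "\<forall>\<sigma>. \<rho> \<sigma> \<le> real c * M \<sigma>"
      using assms unfolding universal_def by blast
    moreover have "0 \<le> M \<sigma>" for \<sigma>
      using assms unfolding universal_def left_ce_semimeasure_def semimeasure_def by blast
    ultimately show "MLR \<rho> \<subseteq> MLR M" by (intro MLR_subset_MLR_if_dominated) auto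
  qed
qed

theorem proposition5p3:
  fixes M :: "bool list \<Rightarrow> real"
  assumes "universal M"
  shows "\<exists>Mt. left_ce_semimeasure Mt \<and> \<not> universal Mt \<and>
           MLR Mt = MLR M \<and> MLR M = (\<Union>\<rho>\<in>{\<rho>. left_ce_semimeasure \<rho>}. MLR \<rho>)"
proof (intro exI conjI)
  have M: "left_ce_semimeasure M" using assms unfolding universal_def by blast
  show "left_ce_semimeasure (damped M)" using M by (rule left_ce_semimeasure_damped)
  show "\<not> universal (damped M)" using assms by (rule not_universal_damped)
  show "MLR (damped M) = MLR M" using M unfolding left_ce_semimeasure_def by (simp add: MLR_damped)
  show "MLR M = (\<Union>\<rho>\<in>{\<rho>. left_ce_semimeasure \<rho>}. MLR \<rho>)" using assms by (rule MLR_universal_eq_Union)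
qed

end
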